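(* Let $X$ be a compact metric space and let $f\colon X\to X$ be a homeomorphism which is positively $n$-expansive (for some integer $n\geq 1$) and has the L-shadowing property. Then $X$ is finite.
   Context: Let $(X,d)$ be a metric space and $f\colon X\to X$. For $x\in X$ and $c>0$, the local stable set of size $c$ is $W^s_c(x)=\{y\in X: d(f^k(y),f^k(x))\leq c \text{ for every } k\geq 0\}$. The map $f$ is positively $n$-expansive if there exists $c>0$ such that for every $x\in X$ the set $W^s_c(x)$ contains at most $n$ distinct points. For $\delta>0$, a sequence $(x_k)_{k\in\mathbb{Z}}\subset X$ is a $\delta$-pseudo orbit if $d(f(x_k),x_{k+1})<\delta$ for all $k$; it is a two-sided limit pseudo orbit if $d(f(x_k),x_{k+1})\to 0$ as $|k|\to\infty$. A point $z$ $\varepsilon$-shadows $(x_k)_{k\in\mathbb{Z}}$ if $d(f^k(z),x_k)<\varepsilon$ for all $k\in\mathbb{Z}$, and $z$ two-sided limit shadows $(x_k)$ if $d(f^k(z),x_k)\to0$ as $|k|\to\infty$. A homeomorphism $f$ has the L-shadowing property if for every $\varepsilon>0$ there is $\delta>0$ such that every $\delta$-pseudo orbit $(x_k)_{k\in\mathbb{Z}}$ which is also a two-sided limit pseudo orbit is both $\varepsilon$-shadowed and two-sided limit shadowed by one and the same point $z\in X$. *)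

theory Defs
  imports "HOL-Analysis.Analysis"
begin

definition local_stable_set :: "('a::metric_space \<Rightarrow> 'a) \<Rightarrow> real \<Rightarrow> 'a \<Rightarrow> 'a set" where
  "local_stable_set f c x = {y. \<forall>k::nat. dist ((f ^^ k) y) ((f ^^ k) x) \<le> c}"

definition pos_n_expansive :: "nat \<Rightarrow> ('a::metric_space \<Rightarrow> 'a) \<Rightarrow> bool" where
  "pos_n_expansive n f \<longleftrightarrow>
     (\<exists>c>0. \<forall>x. finite (local_stable_set f c x) \<and> card (local_stable_set f c x) \<le> n)"

definition int_iter :: "('a \<Rightarrow> 'a) \<Rightarrow> int \<Rightarrow> 'a \<Rightarrow> 'a" where
  "int_iter f k = (if k \<ge> 0 then f ^^ nat k else (inv f) ^^ nat (- k))"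

definition pseudo_orbit :: "('a::metric_space \<Rightarrow> 'a) \<Rightarrow> real \<Rightarrow> (int \<Rightarrow> 'a) \<Rightarrow> bool" where
  "pseudo_orbit f \<delta> xs \<longleftrightarrow> (\<forall>k. dist (f (xs k)) (xs (k + 1)) < \<delta>)"

definition two_sided_limit_pseudo_orbit :: "('a::metric_space \<Rightarrow> 'a) \<Rightarrow> (int \<Rightarrow> 'a) \<Rightarrow> bool" where
  "two_sided_limit_pseudo_orbit f xs \<longleftrightarrow>
     ((\<lambda>k. dist (f (xs k)) (xs (k + 1))) \<longlongrightarrow> 0) at_top \<and>
     ((\<lambda>k. dist (f (xs k)) (xs (k + 1))) \<longlongrightarrow> 0) at_bot"

definition eps_shadows :: "('a::metric_space \<Rightarrow> 'a) \<Rightarrow> real \<Rightarrow> 'a \<Rightarrow> (int \<Rightarrow> 'a) \<Rightarrow> bool" where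
  "eps_shadows f \<epsilon> z xs \<longleftrightarrow> (\<forall>k. dist (int_iter f k z) (xs k) < \<epsilon>)"

definition two_sided_limit_shadows :: "('a::metric_space \<Rightarrow> 'a) \<Rightarrow> 'a \<Rightarrow> (int \<Rightarrow> 'a) \<Rightarrow> bool" where
  "two_sided_limit_shadows f z xs \<longleftrightarrow>
     ((\<lambda>k. dist (int_iter f k z) (xs k)) \<longlongrightarrow> 0) at_top \<and>
     ((\<lambda>k. dist (int_iter f k z) (xs k)) \<longlongrightarrow> 0) at_bot"

definition L_shadowing :: "('a::metric_space \<Rightarrow> 'a) \<Rightarrow> bool" where
  "L_shadowing f \<longleftrightarrow>
     (\<forall>\<epsilon>>0. \<exists>\<delta>>0. \<forall>xs. pseudo_orbit f \<delta> xs \<and> two_sided_limit_pseudo_orbit f xs \<longrightarrow>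
        (\<exists>z. eps_shadows f \<epsilon> z xs \<and> two_sided_limit_shadows f z xs))"

end

theory Submission
  imports Defs
begin

(* If X were infinite, fix a finite \<rho>-net Y. Gluing the past of a point q to the future of a
   net point y near q gives a two-sided limit pseudo orbit with a single small jump, and its
   shadow lies in W^s_c(y). So the finite set Z of all points of the stable sets W^s_c(y), y in Y,
   tracks every backward orbit within \<epsilon>. Among n |Z| + 1 points that are \<gamma>-separated, n + 1
   have the same tracker for f^N p, so their orbits stay c-close up to time N. But compactness
   and positive n-expansivity give an N, depending only on \<gamma>, beyond which no such family
   has more than n members. *)

definition bowen_ball :: "('a::metric_space \<Rightarrow> 'a) \<Rightarrow> real \<Rightarrow> nat \<Rightarrow> 'a \<Rightarrow> 'a set" where
  "bowen_ball f c N x = {y. \<forall>j\<le>N. dist ((f ^^ j) y) ((f ^^ j) x) \<le> c}"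

definition dist_separated :: "real \<Rightarrow> 'a::metric_space set \<Rightarrow> bool" where
  "dist_separated \<gamma> S \<longleftrightarrow> (\<forall>a\<in>S. \<forall>b\<in>S. a \<noteq> b \<longrightarrow> \<gamma> \<le> dist a b)"

lemma finite_imp_dist_separated:
  fixes P :: "'a::metric_space set"
  assumes "finite P"
  obtains \<gamma> where "\<gamma> > 0" "dist_separated \<gamma> P"
proof -
  define D where "D = (\<lambda>(a, b). dist a b) ` {p \<in> P \<times> P. fst p \<noteq> snd p}"
  have "finite D" using assms by (simp add: D_def)
  define \<gamma> where "\<gamma> = (if D = {} then 1 else Min D)"
  have "\<gamma> > 0" using \<open>finite D\<close> by (auto simp: D_def \<gamma>_def)
  moreover have "dist_separated \<gamma> P"
    unfolding dist_separated_def
  proof (intro ballI impI)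
    fix a b assume "a \<in> P" "b \<in> P" "a \<noteq> b"
    then have "dist a b \<in> D" by (force simp: D_def)
    then show "\<gamma> \<le> dist a b" using \<open>finite D\<close> by (auto simp: \<gamma>_def)
  qed
  ultimately show thesis using that by blast
qed

lemma not_card_le_imp_inj_tuple:
  assumes "\<not> (finite S \<and> card S \<le> n)"
  obtains u :: "nat \<Rightarrow> 'a" where "inj_on u {..n}" "u ` {..n} \<subseteq> S"
proof -
  obtain T where T: "T \<subseteq> S" "finite T" "card T = Suc n"
  proof (cases "finite S")
    case True
    with assms obtain T where "T \<subseteq> S" "card T = Suc n" "finite T"
      by (metis not_less_eq_eq obtain_subset_with_card_n)
    then show thesis using that by blast
  next
    case False
    then show thesis using that infinite_arbitrarily_large by blast
  qed
  then obtain u where "bij_betw u {0..<Suc n} T"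
    by (metis ex_bij_betw_nat_finite)
  moreover have "{0..<Suc n} = {..n}" by auto
  ultimately show thesis using that T(1) by (auto simp: bij_betw_def)
qed

lemma continuous_on_funpow:
  fixes f :: "'a::topological_space \<Rightarrow> 'a"
  assumes "continuous_on UNIV f"
  shows "continuous_on UNIV (f ^^ j)"
proof (induction j)
  case (Suc j)
  then show ?case
    using continuous_on_compose[OF Suc continuous_on_subset[OF assms]] by simp
qed (simp add: continuous_on_id)

lemma compact_imp_common_convergent_subseq:
  fixes s :: "nat \<Rightarrow> nat \<Rightarrow> 'a::metric_space"
  assumes "compact (UNIV :: 'a set)"
  shows "\<exists>r. strict_mono r \<and> (\<forall>i<m. \<exists>l. (\<lambda>k. s (r k) i) \<longlonglongrightarrow> l)"
proof (induction m)
  case 0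
  show ?case by (rule exI[of _ id]) (simp add: strict_mono_def)
next
  case (Suc m)
  then obtain r where r: "strict_mono r" "\<forall>i<m. \<exists>l. (\<lambda>k. s (r k) i) \<longlonglongrightarrow> l"
    by blast
  obtain l r' where r': "strict_mono (r' :: nat \<Rightarrow> nat)" "((\<lambda>k. s (r k) m) \<circ> r') \<longlonglongrightarrow> l"
    using compact_imp_seq_compact[OF assms] by (rule seq_compactE) auto
  have "\<exists>l. (\<lambda>k. s ((r \<circ> r') k) i) \<longlonglongrightarrow> l" if i: "i < Suc m" for i
  proof (cases "i = m")
    case True
    then show ?thesis using r' by (auto simp: o_def)
  next
    case False
    then obtain l where "(\<lambda>k. s (r k) i) \<longlonglongrightarrow> l" using r i by (meson less_SucE)
    from LIMSEQ_subseq_LIMSEQ[OF this r'(1)] show ?thesis by (auto simp: o_def)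
  qed
  then show ?case using strict_mono_o[OF r(1) r'(1)] by blast
qed

lemma limit_in_local_stable_set:
  fixes f :: "'a::metric_space \<Rightarrow> 'a"
  assumes cont: "continuous_on UNIV f"
    and y: "y \<longlonglongrightarrow> y0" and x: "x \<longlonglongrightarrow> x0" and N: "filterlim N at_top sequentially"
    and bowen: "\<And>k. y k \<in> bowen_ball f c (N k) (x k)"
  shows "y0 \<in> local_stable_set f c x0"
  unfolding local_stable_set_def
proof (intro CollectI allI)
  fix j
  have iterate: "(\<lambda>k. (f ^^ j) (z k)) \<longlonglongrightarrow> (f ^^ j) z0" if "z \<longlonglongrightarrow> z0" for z z0
    using continuous_on_tendsto_compose[OF continuous_on_funpow[OF cont] that] by simp
  show "dist ((f ^^ j) y0) ((f ^^ j) x0) \<le> c"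
  proof (rule tendsto_upperbound)
    show "(\<lambda>k. dist ((f ^^ j) (y k)) ((f ^^ j) (x k))) \<longlonglongrightarrow> dist ((f ^^ j) y0) ((f ^^ j) x0)"
      by (intro tendsto_dist iterate y x)
    show "\<forall>\<^sub>F k in sequentially. dist ((f ^^ j) (y k)) ((f ^^ j) (x k)) \<le> c"
      using N unfolding filterlim_at_top
      by (rule allE[of _ j], elim eventually_mono) (use bowen in \<open>auto simp: bowen_ball_def\<close>)
  qed simp
qed

lemma local_stable_sets_bound_separated_bowen_balls:
  fixes f :: "'a::metric_space \<Rightarrow> 'a"
  assumes compact: "compact (UNIV :: 'a set)" and cont: "continuous_on UNIV f"
    and stable: "\<And>x. finite (local_stable_set f c x) \<and> card (local_stable_set f c x) \<le> n"
    and "\<gamma> > 0"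
  shows "\<exists>N. \<forall>x S. S \<subseteq> bowen_ball f c N x \<longrightarrow> dist_separated \<gamma> S \<longrightarrow> finite S \<and> card S \<le> n"
proof (rule ccontr)
  assume contra: "\<not> ?thesis"
  have "\<exists>x u. (\<forall>i\<le>n. u i \<in> bowen_ball f c N x) \<and>
      (\<forall>i\<le>n. \<forall>l\<le>n. i \<noteq> l \<longrightarrow> \<gamma> \<le> dist (u i) (u l))" for N
  proof -
    obtain x S where S: "S \<subseteq> bowen_ball f c N x" "dist_separated \<gamma> S"
      "\<not> (finite S \<and> card S \<le> n)"
      using contra by blast
    obtain u where "inj_on u {..n}" "u ` {..n} \<subseteq> S"
      using S(3) by (rule not_card_le_imp_inj_tuple)
    with S(1,2) show ?thesis
      unfolding dist_separated_def inj_on_def image_subset_iff atMost_iff by blast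
  qed
  then obtain x u where xu: "\<And>N i. i \<le> n \<Longrightarrow> u N i \<in> bowen_ball f c N (x N)"
      "\<And>N i l. i \<le> n \<Longrightarrow> l \<le> n \<Longrightarrow> i \<noteq> l \<Longrightarrow> \<gamma> \<le> dist (u N i) (u N l)"
    by metis
  define s where "s N i = (if i \<le> n then u N i else x N)" for N i
  obtain r where r: "strict_mono r" "\<forall>i<Suc (Suc n). \<exists>l. (\<lambda>k. s (r k) i) \<longlonglongrightarrow> l"
    using compact_imp_common_convergent_subseq[OF compact] by blast
  then obtain v where v: "\<And>i. i \<le> Suc n \<Longrightarrow> (\<lambda>k. s (r k) i) \<longlonglongrightarrow> v i"
    by (metis less_Suc_eq_le)
  have "\<gamma> \<le> dist (v i) (v l)" if "i \<le> n" "l \<le> n" "i \<noteq> l" for i l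
  proof (rule tendsto_lowerbound)
    show "(\<lambda>k. dist (s (r k) i) (s (r k) l)) \<longlonglongrightarrow> dist (v i) (v l)"
      using v that by (intro tendsto_dist) auto
  qed (use xu(2) that in \<open>auto simp: s_def\<close>)
  with \<open>\<gamma> > 0\<close> have inj: "inj_on v {..n}"
    by (fastforce intro: inj_onI)
  have "v ` {..n} \<subseteq> local_stable_set f c (v (Suc n))"
  proof (intro image_subsetI limit_in_local_stable_set[OF cont])
    fix i assume "i \<in> {..n}"
    then show "(\<lambda>k. s (r k) i) \<longlonglongrightarrow> v i" using v[of i] by simp
    show "s (r k) i \<in> bowen_ball f c (r k) (s (r k) (Suc n))" for k
      using xu(1) \<open>i \<in> {..n}\<close> by (simp add: s_def)
  qed (use v filterlim_subseq[OF r(1)] in auto)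
  then have "card (v ` {..n}) \<le> n"
    using stable by (meson card_mono order_trans)
  with card_image[OF inj] show False by simp
qed

lemma int_iter_nat: "int_iter f (int k) = f ^^ k"
  by (simp add: int_iter_def)

lemma int_iter_neg: "int_iter f (- int k) = inv f ^^ k"
proof (cases k)
  case (Suc m)
  then have "nat (- (- int k)) = k" by simp
  with Suc show ?thesis by (simp add: int_iter_def del: of_nat_Suc)
qed (simp add: int_iter_def)

lemma int_iter_succ:
  assumes "surj f"
  shows "int_iter f (k + 1) x = f (int_iter f k x)"
proof (cases "k \<ge> 0")
  case True
  then have "nat (k + 1) = Suc (nat k)" by simp
  with True show ?thesis by (simp add: int_iter_def)
next
  case False
  then consider "k = -1" | "k + 1 < 0" by linarith
  then show ?thesis
  proof cases
    case 2
    then have "nat (- k) = Suc (nat (- (k + 1)))" by simp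
    with 2 show ?thesis by (simp add: int_iter_def surj_f_inv_f[OF assms])
  qed (simp add: int_iter_def surj_f_inv_f[OF assms])
qed

lemma funpow_eq_inv_funpow_diff:
  assumes "bij f" "j \<le> N"
  shows "(f ^^ j) x = (inv f ^^ (N - j)) ((f ^^ N) x)"
proof -
  have "(f ^^ N) x = (f ^^ (N - j)) ((f ^^ j) x)"
    using assms(2) by (metis funpow_add le_add_diff_inverse2 o_apply)
  then show ?thesis using inv_fn_o_fn_is_id[OF assms(1)] by (metis o_apply)
qed

definition glued_orbit :: "('a \<Rightarrow> 'a) \<Rightarrow> 'a \<Rightarrow> 'a \<Rightarrow> int \<Rightarrow> 'a" where
  "glued_orbit f x y k = (if k \<le> 0 then int_iter f k x else int_iter f k y)"

lemma dist_glued_orbit_step: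
  assumes "surj f"
  shows "dist (f (glued_orbit f x y k)) (glued_orbit f x y (k + 1)) =
    (if k = 0 then dist (f x) (f y) else 0)"
  using assms by (simp add: glued_orbit_def int_iter_succ) (simp add: int_iter_def)

lemma glued_orbit_two_sided_limit_pseudo_orbit:
  assumes "surj f" "dist (f x) (f y) < \<delta>"
  shows "pseudo_orbit f \<delta> (glued_orbit f x y)"
    and "two_sided_limit_pseudo_orbit f (glued_orbit f x y)"
proof -
  have "\<delta> > 0" using assms(2) zero_le_dist[of "f x" "f y"] by linarith
  with assms show "pseudo_orbit f \<delta> (glued_orbit f x y)"
    by (simp add: pseudo_orbit_def dist_glued_orbit_step)
  have "eventually (\<lambda>k. dist (f (glued_orbit f x y k)) (glued_orbit f x y (k + 1)) = 0) at_top"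
    using eventually_ge_at_top[of "1::int"]
    by eventually_elim (simp add: dist_glued_orbit_step[OF assms(1)])
  moreover have "eventually (\<lambda>k. dist (f (glued_orbit f x y k)) (glued_orbit f x y (k + 1)) = 0) at_bot"
    using eventually_le_at_bot[of "-1::int"]
    by eventually_elim (simp add: dist_glued_orbit_step[OF assms(1)])
  ultimately show "two_sided_limit_pseudo_orbit f (glued_orbit f x y)"
    unfolding two_sided_limit_pseudo_orbit_def by (simp add: tendsto_eventually)
qed

lemma L_shadowing_shadows_glued_orbits:
  assumes "bij f" "L_shadowing f" "\<epsilon> > 0"
  obtains \<delta> where "\<delta> > 0"
    "\<And>x y. dist (f x) (f y) < \<delta> \<Longrightarrow> \<exists>z. (\<forall>k. dist ((inv f ^^ k) z) ((inv f ^^ k) x) < \<epsilon>) \<and>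
       (\<forall>k>0. dist ((f ^^ k) z) ((f ^^ k) y) < \<epsilon>)"
proof -
  obtain \<delta> where "\<delta> > 0" and shadow: "\<And>xs. pseudo_orbit f \<delta> xs \<Longrightarrow>
      two_sided_limit_pseudo_orbit f xs \<Longrightarrow> \<exists>z. eps_shadows f \<epsilon> z xs"
    using assms(2,3) unfolding L_shadowing_def by blast
  have "\<exists>z. (\<forall>k. dist ((inv f ^^ k) z) ((inv f ^^ k) x) < \<epsilon>) \<and>
       (\<forall>k>0. dist ((f ^^ k) z) ((f ^^ k) y) < \<epsilon>)" if jump: "dist (f x) (f y) < \<delta>" for x y
  proof -
    have "surj f" using assms(1) by (simp add: bij_def)
    then obtain z where "eps_shadows f \<epsilon> z (glued_orbit f x y)"
      using shadow glued_orbit_two_sided_limit_pseudo_orbit[OF \<open>surj f\<close> jump] by blast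
    then have z: "\<And>k. dist (int_iter f k z) (glued_orbit f x y k) < \<epsilon>"
      by (simp add: eps_shadows_def)
    show ?thesis
    proof (intro exI conjI allI impI)
      show "dist ((inv f ^^ k) z) ((inv f ^^ k) x) < \<epsilon>" for k
        using z[of "- int k"] by (simp add: glued_orbit_def int_iter_neg)
      show "dist ((f ^^ k) z) ((f ^^ k) y) < \<epsilon>" if "k > 0" for k
        using z[of "int k"] that by (simp add: glued_orbit_def int_iter_nat)
    qed
  qed
  with \<open>\<delta> > 0\<close> show thesis using that by blast
qed

lemma L_shadowing_finite_backward_trackers:
  fixes f :: "'a::metric_space \<Rightarrow> 'a"
  assumes compact: "compact (UNIV :: 'a set)" and cont: "continuous_on UNIV f"
    and "bij f" "L_shadowing f"
    and stable: "\<And>x. finite (local_stable_set f c x)"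
    and "\<epsilon> > 0" "2 * \<epsilon> \<le> c"
  obtains Z where "finite Z" "\<And>q. \<exists>z\<in>Z. \<forall>k. dist ((inv f ^^ k) z) ((inv f ^^ k) q) < \<epsilon>"
proof -
  obtain \<delta> where "\<delta> > 0" and shadow: "\<And>x y. dist (f x) (f y) < \<delta> \<Longrightarrow>
      \<exists>z. (\<forall>k. dist ((inv f ^^ k) z) ((inv f ^^ k) x) < \<epsilon>) \<and> (\<forall>k>0. dist ((f ^^ k) z) ((f ^^ k) y) < \<epsilon>)"
    using L_shadowing_shadows_glued_orbits[OF \<open>bij f\<close> \<open>L_shadowing f\<close> \<open>\<epsilon> > 0\<close>] by blast
  obtain \<rho>0 where "\<rho>0 > 0" and unif: "\<And>a b. dist a b < \<rho>0 \<Longrightarrow> dist (f a) (f b) < \<delta>"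
    using compact_uniformly_continuous[OF cont compact] \<open>\<delta> > 0\<close>
    unfolding uniformly_continuous_on_def by (metis UNIV_I)
  define \<rho> where "\<rho> = min \<rho>0 \<epsilon>"
  have "\<rho> > 0" using \<open>\<rho>0 > 0\<close> \<open>\<epsilon> > 0\<close> by (simp add: \<rho>_def)
  then obtain Y where "finite Y" and net: "(UNIV :: 'a set) \<subseteq> (\<Union>y\<in>Y. ball y \<rho>)"
    using compact unfolding compact_eq_totally_bounded by blast
  show thesis
  proof
    show "finite (\<Union>y\<in>Y. local_stable_set f c y)"
      using \<open>finite Y\<close> stable by simp
    fix q
    have "q \<in> (\<Union>y\<in>Y. ball y \<rho>)" using net by (rule subsetD) simp
    then obtain y where "y \<in> Y" "dist y q < \<rho>" by auto
    then have "dist (f q) (f y) < \<delta>" using unif[of q y] by (simp add: \<rho>_def dist_commute)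
    then obtain z where backward: "\<forall>k. dist ((inv f ^^ k) z) ((inv f ^^ k) q) < \<epsilon>"
      and forward: "\<forall>k>0. dist ((f ^^ k) z) ((f ^^ k) y) < \<epsilon>"
      using shadow by blast
    have "dist z y < 2 * \<epsilon>"
      using backward[rule_format, of 0] \<open>dist y q < \<rho>\<close> dist_triangle[of z y q]
      by (simp add: \<rho>_def dist_commute)
    have "dist ((f ^^ k) z) ((f ^^ k) y) \<le> c" for k
    proof (cases "k = 0")
      case False
      then have "dist ((f ^^ k) z) ((f ^^ k) y) < \<epsilon>" using forward by simp
      with \<open>2 * \<epsilon> \<le> c\<close> \<open>\<epsilon> > 0\<close> show ?thesis by linarith
    qed (use \<open>dist z y < 2 * \<epsilon>\<close> \<open>2 * \<epsilon> \<le> c\<close> in simp)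
    then have "z \<in> local_stable_set f c y" by (simp add: local_stable_set_def)
    with \<open>y \<in> Y\<close> backward show "\<exists>z\<in>\<Union>y\<in>Y. local_stable_set f c y.
        \<forall>k. dist ((inv f ^^ k) z) ((inv f ^^ k) q) < \<epsilon>" by (intro bexI[of _ z] UN_I)
  qed
qed

lemma finite_if_finite_backward_trackers:
  fixes f :: "'a::metric_space \<Rightarrow> 'a"
  assumes compact: "compact (UNIV :: 'a set)" and cont: "continuous_on UNIV f" and "bij f"
    and stable: "\<And>x. finite (local_stable_set f c x) \<and> card (local_stable_set f c x) \<le> n"
    and "2 * \<epsilon> \<le> c" and "finite Z"
    and trackers: "\<And>q. \<exists>z\<in>Z. \<forall>k. dist ((inv f ^^ k) z) ((inv f ^^ k) q) < \<epsilon>"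
  shows "finite (UNIV :: 'a set)"
proof (rule ccontr)
  assume "infinite (UNIV :: 'a set)"
  then obtain P :: "'a set" where "finite P" "card P = n * card Z + 1"
    using infinite_arbitrarily_large by blast
  obtain \<gamma> where "\<gamma> > 0" and sep: "dist_separated \<gamma> P"
    using finite_imp_dist_separated[OF \<open>finite P\<close>] by blast
  obtain N where N: "\<And>x S. S \<subseteq> bowen_ball f c N x \<Longrightarrow> dist_separated \<gamma> S \<Longrightarrow> card S \<le> n"
    using local_stable_sets_bound_separated_bowen_balls[OF compact cont stable \<open>\<gamma> > 0\<close>] by blast
  have "\<forall>q. \<exists>z. z \<in> Z \<and> (\<forall>k. dist ((inv f ^^ k) z) ((inv f ^^ k) q) < \<epsilon>)"
    using trackers by blast
  then obtain t where t: "\<And>q. t q \<in> Z" "\<And>q k. dist ((inv f ^^ k) (t q)) ((inv f ^^ k) q) < \<epsilon>"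
    by metis
  define h where "h p = t ((f ^^ N) p)" for p
  have "Z \<noteq> {}" using t(1) by blast
  then obtain b where "card P \<le> card (h -` {b} \<inter> P) * card Z"
    using pigeonhole_card[of h P Z] t(1) \<open>finite P\<close> \<open>finite Z\<close> by (auto simp: h_def)
  define F where "F = h -` {b} \<inter> P"
  have large: "n < card F"
  proof (rule ccontr)
    assume "\<not> n < card F"
    then have "card F * card Z \<le> n * card Z" by simp
    with \<open>card P \<le> card (h -` {b} \<inter> P) * card Z\<close> \<open>card P = n * card Z + 1\<close> show False
      unfolding F_def by linarith
  qed
  then obtain p0 where "p0 \<in> F" by fastforce
  have close: "dist ((f ^^ j) p) ((inv f ^^ (N - j)) b) < \<epsilon>" if "p \<in> F" "j \<le> N" for p j
    using t(2)[of "N - j" "(f ^^ N) p"] that funpow_eq_inv_funpow_diff[OF \<open>bij f\<close> \<open>j \<le> N\<close>]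
    by (simp add: F_def h_def dist_commute)
  have "F \<subseteq> bowen_ball f c N p0"
  proof
    fix p assume "p \<in> F"
    have "dist ((f ^^ j) p) ((f ^^ j) p0) \<le> c" if "j \<le> N" for j
      using dist_triangle_less_add[OF close[OF \<open>p \<in> F\<close> that] close[OF \<open>p0 \<in> F\<close> that]]
        \<open>2 * \<epsilon> \<le> c\<close> by linarith
    then show "p \<in> bowen_ball f c N p0" by (simp add: bowen_ball_def)
  qed
  moreover have "dist_separated \<gamma> F"
    using sep by (simp add: F_def dist_separated_def)
  ultimately show False using N large by (meson not_le)
qed

theorem theoremA:
  fixes f :: "'a::metric_space \<Rightarrow> 'a" and n :: nat
  assumes "compact (UNIV :: 'a set)"
    and "\<exists>g. homeomorphism UNIV UNIV f g"
    and "n \<ge> 1"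
    and "pos_n_expansive n f"
    and "L_shadowing f"
  shows "finite (UNIV :: 'a set)"
proof -
  obtain g where hom: "homeomorphism UNIV UNIV f g" using assms(2) by blast
  then have cont: "continuous_on UNIV f" by (simp add: homeomorphism_def)
  have "bij f" using hom by (intro o_bij[of g]) (auto simp: homeomorphism_def fun_eq_iff)
  obtain c where "c > 0" and stable:
      "\<And>x. finite (local_stable_set f c x) \<and> card (local_stable_set f c x) \<le> n"
    using assms(4) by (auto simp: pos_n_expansive_def)
  obtain Z where Z: "finite Z" "\<And>q. \<exists>z\<in>Z. \<forall>k. dist ((inv f ^^ k) z) ((inv f ^^ k) q) < c / 2"
    using L_shadowing_finite_backward_trackers[OF assms(1) cont \<open>bij f\<close> assms(5), of c "c / 2"]
      stable \<open>c > 0\<close> by auto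
  then show ?thesis
    using finite_if_finite_backward_trackers[OF assms(1) cont \<open>bij f\<close> stable _ Z] by simp
qed

end
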